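(* Suppose Assumptions 1, 2 and 3 hold and problem (P) is feasible (equivalently $\sum_i(\underline{x}_i-\phi_i(\underline{x}_i))\le\sum_i d_i\le\sum_i(\bar{x}_i-\phi_i(\bar{x}_i))$). Consider the distributed dynamics, for $i=1,\dots,N$, $$\dot{\lambda}_i=d_i-\hat{x}_i(\lambda_i)+\phi_i\big(\hat{x}_i(\lambda_i)\big)+k\sum_{j\in\mathcal{N}_i}(\lambda_j-\lambda_i),\qquad x_i(t)=\hat{x}_i(\lambda_i(t)),$$ with coupling gain $k>0$. Then for every $k>0$ and every initial condition $(\lambda_1(0),\dots,\lambda_N(0))\in\mathbb{R}^N$, the solution $(\lambda_1(t),\dots,\lambda_N(t))$ converges to a point as $t\to\infty$, and $$\lim_{t\to\infty}\sum_{i=1}^N\Big(x_i(t)-\phi_i\big(x_i(t)\big)\Big)=\sum_{i=1}^N d_i.$$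
   Context: For $i=1,\dots,N$: $d_i\in\mathbb{R}$, $\mathcal{X}_i=[\underline{x}_i,\bar{x}_i]$ a nonempty closed interval, $f_i,\phi_i:\mathbb{R}\to\mathbb{R}$. Problem (P): minimize $\sum_{i=1}^N f_i(x_i)$ subject to $\sum_{i=1}^N d_i=\sum_{i=1}^N(x_i-\phi_i(x_i))$ and $x_i\in\mathcal{X}_i$ for all $i$. Assumption 1: for each $i$, $f_i$ and $\phi_i$ are continuously differentiable, $f_i$ is strictly convex on $\mathcal{X}_i$, $\phi_i$ is convex on $\mathcal{X}_i$, and $\phi_i'(x_i)<1$ for all $x_i\in\mathcal{X}_i$. Assumption 2: $f_i'(x_i)>0$ for all $x_i\in\mathcal{X}_i$ and all $i$. Assumption 3: the communication graph $\mathcal{G}=(\{1,\dots,N\},\mathcal{E})$ is undirected and connected; $\mathcal{N}_i=\{j:(j,i)\in\mathcal{E}\}$. Let $v_i(x_i)=f_i'(x_i)(1-\phi_i'(x_i))^{-1}$ on $\mathcal{X}_i$ (strictly increasing). Define for $\lambda\in\mathbb{R}$: $\hat{x}_i(\lambda)=\underline{x}_i$ if $\lambda\le v_i(\underline{x}_i)$; $\hat{x}_i(\lambda)=v_i^{-1}(\lambda)$ if $v_i(\underline{x}_i)<\lambda<v_i(\bar{x}_i)$; $\hat{x}_i(\lambda)=\bar{x}_i$ if $\lambda\ge v_i(\bar{x}_i)$. *)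

theory Defs
  imports "HOL-Analysis.Analysis"
begin

definition strictly_convex_on :: "real set \<Rightarrow> (real \<Rightarrow> real) \<Rightarrow> bool" where
  "strictly_convex_on S g \<longleftrightarrow>
     (\<forall>x\<in>S. \<forall>y\<in>S. \<forall>u::real. x \<noteq> y \<and> 0 < u \<and> u < 1 \<longrightarrow>
        g (u * x + (1 - u) * y) < u * g x + (1 - u) * g y)"

definition vfun :: "(real \<Rightarrow> real) \<Rightarrow> (real \<Rightarrow> real) \<Rightarrow> real \<Rightarrow> real" where
  "vfun f \<phi> x = deriv f x / (1 - deriv \<phi> x)"

definition xhat :: "(real \<Rightarrow> real) \<Rightarrow> (real \<Rightarrow> real) \<Rightarrow> real \<Rightarrow> real \<Rightarrow> real \<Rightarrow> real" where
  "xhat f \<phi> lo hi l =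
     (if l \<le> vfun f \<phi> lo then lo
      else if l \<ge> vfun f \<phi> hi then hi
      else the_inv_into {lo..hi} (vfun f \<phi>) l)"

end

theory Submission
  imports Defs
begin

text \<open>Write \<open>g\<^sub>i(\<lambda>) = x\<^sub>i - \<phi>\<^sub>i(x\<^sub>i)\<close> with \<open>x\<^sub>i = x_hat\<^sub>i(\<lambda>)\<close>. Assumptions 1 and 2 make \<open>v\<^sub>i\<close>
  continuous and strictly increasing, so \<open>g\<^sub>i\<close> is continuous, nondecreasing and constant outside
  a bounded interval, and the dynamics reads \<open>\<lambda>' = d - g(\<lambda>) - k L \<lambda>\<close> with \<open>L\<close> the graph
  Laplacian. This is the negative gradient flow of the convex energy
  \<open>\<Sum>\<^sub>i (G\<^sub>i(\<lambda>\<^sub>i) - d\<^sub>i \<lambda>\<^sub>i)\<close> plus \<open>k/4\<close> times the sum of \<open>(\<lambda>\<^sub>i - \<lambda>\<^sub>j)\<^sup>2\<close> over ordered pairs of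
  neighbours, where \<open>G\<^sub>i' = g\<^sub>i\<close>.
  Feasibility bounds the energy from below in terms of the disagreement, so the disagreement stays
  bounded along a trajectory, and a barrier argument for \<open>\<Sum>\<^sub>i \<lambda>\<^sub>i\<close> then bounds the whole
  trajectory. The energy decreases at rate \<open>|\<lambda>'|\<^sup>2\<close>, hence the velocity becomes arbitrarily
  small along a sequence of times, and a subsequence converges to an equilibrium \<open>p\<close>. The vector
  field is monotone (\<open>g\<close> nondecreasing, \<open>L\<close> positive semidefinite), so \<open>|\<lambda>(t) - p|\<close> is
  nonincreasing and the whole trajectory converges to \<open>p\<close>. Summing the equilibrium equations, the
  Laplacian terms cancel and \<open>\<Sum>\<^sub>i g\<^sub>i(p\<^sub>i) = \<Sum>\<^sub>i d\<^sub>i\<close>.\<close>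

section \<open>Calculus on the real line\<close>

lemma strictly_convex_on_imp_convex_on:
  fixes f :: "real \<Rightarrow> real"
  assumes "strictly_convex_on {a..b} f"
  shows "convex_on {a..b} f"
proof (rule convex_onI)
  fix t x y :: real assume t: "0 < t" "t < 1" and xy: "x \<in> {a..b}" "y \<in> {a..b}"
  show "f ((1 - t) *\<^sub>R x + t *\<^sub>R y) \<le> (1 - t) * f x + t * f y"
  proof (cases "x = y")
    case True then show ?thesis by (simp add: algebra_simps)
  next
    case False
    then show ?thesis
      using assms[unfolded strictly_convex_on_def, rule_format, of x y "1 - t"] xy t by simp
  qed
qed (simp add: convex_real_interval)

lemma convex_on_deriv_mono:
  fixes f F :: "real \<Rightarrow> real"
  assumes cvx: "convex_on {a..b} f" and der: "\<And>x. (f has_real_derivative F x) (at x)"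
    and cont: "continuous_on UNIV F"
    and xy: "a \<le> x" "x \<le> y" "y \<le> b"
  shows "F x \<le> F y"
proof -
  have interior: "F u \<le> F w" if "a < u" "u < w" "w < b" for u w
  proof -
    have uw: "u \<in> interior {a..b}" "w \<in> interior {a..b}" using that by auto
    have "f w - f u \<ge> F u * (w - u)"
      by (rule convex_on_imp_above_tangent[OF cvx _ uw(1)])
        (use that in \<open>auto intro: has_field_derivative_at_within der\<close>)
    moreover have "f u - f w \<ge> F w * (u - w)"
      by (rule convex_on_imp_above_tangent[OF cvx _ uw(2)])
        (use that in \<open>auto intro: has_field_derivative_at_within der\<close>)
    ultimately have "F u * (w - u) \<le> F w * (w - u)" by (simp add: algebra_simps)
    then show ?thesis using that by simp
  qed
  show ?thesis
  proof (cases "x = y")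
    case False
    define m where "m = (x + y) / 2"
    have m: "x < m" "m < y" using False xy by (auto simp: m_def)
    have lim: "(F \<longlongrightarrow> F z) (at z within S)" for z S
      using cont by (metis UNIV_I continuous_on_def tendsto_within_subset subset_UNIV)
    have "F x \<le> F m"
    proof (rule tendsto_upperbound[OF lim])
      show "\<forall>\<^sub>F u in at_right x. F u \<le> F m"
        using eventually_at_right_real[OF m(1)] by eventually_elim (use interior m xy in auto)
    qed (simp add: trivial_limit_at_right_real)
    also have "F m \<le> F y"
    proof (rule tendsto_lowerbound[OF lim])
      show "\<forall>\<^sub>F w in at_left y. F m \<le> F w"
        using eventually_at_left_real[OF m(2)] by eventually_elim (use interior m xy in auto)
    qed (simp add: trivial_limit_at_left_real)
    finally show ?thesis .
  qed simp
qed

text \<open>Via the mean value theorem, the derivative at the ends of \<open>[x, y]\<close> brackets the secant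
  slopes on the two halves, and strict convexity separates those two slopes.\<close>
lemma strictly_convex_on_deriv_strict_mono:
  fixes f F :: "real \<Rightarrow> real"
  assumes sc: "strictly_convex_on {a..b} f" and der: "\<And>x. (f has_real_derivative F x) (at x)"
    and cont: "continuous_on UNIV F"
    and xy: "a \<le> x" "x < y" "y \<le> b"
  shows "F x < F y"
proof -
  note mono = convex_on_deriv_mono[OF strictly_convex_on_imp_convex_on[OF sc] der cont]
  define m where "m = (x + y) / 2"
  have m: "x < m" "m < y" using xy by (auto simp: m_def)
  obtain u where u: "x < u" "u < m" "f m - f x = (m - x) * F u"
    using MVT2[OF m(1) der] by blast
  obtain w where w: "m < w" "w < y" "f y - f m = (y - m) * F w"
    using MVT2[OF m(2) der] by blast
  have "f ((1/2) * x + (1 - 1/2) * y) < (1/2) * f x + (1 - 1/2) * f y"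
    using sc[unfolded strictly_convex_on_def, rule_format, of x y "1/2"] xy by simp
  then have "(m - x) * F u < (y - m) * F w"
    unfolding u(3)[symmetric] w(3)[symmetric] by (simp add: m_def field_simps)
  moreover have "m - x = y - m" "0 < m - x" using m by (simp_all add: m_def field_simps)
  ultimately have "F u < F w" by (metis mult_less_cancel_left_pos)
  moreover have "F x \<le> F u" "F w \<le> F y" using mono u w m xy by auto
  ultimately show ?thesis by linarith
qed

lemma C1_differentiable_on_UNIV_derivE:
  fixes f :: "real \<Rightarrow> real"
  assumes "f C1_differentiable_on UNIV"
  obtains F where "\<And>x. (f has_real_derivative F x) (at x)" "continuous_on UNIV F"
    "\<And>x. deriv f x = F x"
proof -
  from assms obtain D where D: "\<And>x. (f has_vector_derivative D x) (at x)" "continuous_on UNIV D"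
    unfolding C1_differentiable_on_def by auto
  then have "\<And>x. (f has_real_derivative D x) (at x)"
    using has_real_derivative_iff_has_vector_derivative by blast
  with D(2) show ?thesis using that DERIV_imp_deriv by blast
qed

lemma mono_imp_mult_diff_nonneg:
  fixes h :: "real \<Rightarrow> real"
  assumes "mono h"
  shows "0 \<le> (a - b) * (h a - h b)"
proof (cases "a \<le> b")
  case True
  then show ?thesis using monoD[OF assms True] by (intro mult_nonpos_nonpos) auto
next
  case False
  then show ?thesis using monoD[OF assms, of b a] by (intro mult_nonneg_nonneg) auto
qed

lemma quadratic_le_imp_bounded:
  fixes \<alpha> \<beta> \<gamma> q :: real
  assumes "0 < \<alpha>" "0 \<le> \<beta>" "\<alpha> * q\<^sup>2 - \<beta> * q \<le> \<gamma>"
  shows "q \<le> 1 + (\<beta> + \<bar>\<gamma>\<bar>) / \<alpha>"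
proof (rule ccontr)
  assume "\<not> ?thesis"
  then have big: "1 + (\<beta> + \<bar>\<gamma>\<bar>) / \<alpha> < q" by simp
  moreover have "0 \<le> (\<beta> + \<bar>\<gamma>\<bar>) / \<alpha>" using assms by simp
  ultimately have q1: "1 < q" by linarith
  from big have "\<alpha> + \<bar>\<gamma>\<bar> < \<alpha> * q - \<beta>" using assms(1) by (simp add: field_simps)
  then have "(\<alpha> + \<bar>\<gamma>\<bar>) * 1 < (\<alpha> * q - \<beta>) * q"
    using q1 assms(1) by (intro mult_strict_mono) auto
  then show False using assms abs_ge_self[of \<gamma>] by (simp add: power2_eq_square algebra_simps)
qed

lemma DERIV_mono_imp_global_min:
  fixes H h :: "real \<Rightarrow> real"
  assumes der: "\<And>x. (H has_real_derivative h x) (at x)" and mono: "mono h"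
    and cont: "continuous_on {a..b} h" and "a \<le> b" "h a \<le> 0" "0 \<le> h b"
  obtains c where "\<And>x. H c \<le> H x"
proof -
  obtain c where "h c = 0" using IVT'[of h a 0 b] assms by auto
  have "H c \<le> H x" for x
  proof (cases "c \<le> x")
    case True
    show ?thesis
    proof (rule DERIV_nonneg_imp_nondecreasing[OF True])
      fix z assume "c \<le> z" "z \<le> x"
      then show "\<exists>y. (H has_real_derivative y) (at z) \<and> 0 \<le> y"
        using der monoD[OF mono, of c z] \<open>h c = 0\<close> by auto
    qed
  next
    case False
    show ?thesis
    proof (rule DERIV_nonpos_imp_nonincreasing[of x c])
      fix z assume "x \<le> z" "z \<le> c"
      then show "\<exists>y. (H has_real_derivative y) (at z) \<and> y \<le> 0"
        using der monoD[OF mono, of z c] \<open>h c = 0\<close> by auto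
    qed (use False in simp)
  qed
  then show thesis by (rule that)
qed

definition primitive :: "(real \<Rightarrow> real) \<Rightarrow> real \<Rightarrow> real" where
  "primitive g x = (LBINT s=0..x. g s)"

lemma primitive_has_real_derivative:
  assumes "continuous_on UNIV g"
  shows "(primitive g has_real_derivative g x) (at x)"
proof -
  let ?a = "min 0 x - 1" and ?b = "max 0 x + 1"
  have "((\<lambda>u. LBINT s=(0::real)..u. g s) has_vector_derivative g x) (at x within {?a..?b})"
    by (rule interval_integral_FTC2) (auto intro: continuous_on_subset[OF assms])
  then have "(primitive g has_vector_derivative g x) (at x within {?a..?b})"
    by (simp add: primitive_def[abs_def] zero_ereal_def)
  moreover have "at x within {?a..?b} = at x" by (rule at_within_Icc_at) auto
  ultimately show ?thesis by (simp add: has_real_derivative_iff_has_vector_derivative)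
qed

lemma DERIV_nonpos_above_imp_le_max:
  fixes s s' :: "real \<Rightarrow> real"
  assumes der: "\<And>t. a \<le> t \<Longrightarrow> (s has_real_derivative s' t) (at t)"
    and nonpos: "\<And>t. a \<le> t \<Longrightarrow> T < s t \<Longrightarrow> s' t \<le> 0"
    and t: "a \<le> t"
  shows "s t \<le> max (s a) T"
proof (rule ccontr)
  define M where "M = max (s a) T"
  assume "\<not> ?thesis"
  then have big: "M < s t" unfolding M_def by linarith
  define Z where "Z = {u \<in> {a..t}. s u \<le> M}"
  have cont: "continuous_on {a..t} s"
    using der by (meson DERIV_isCont atLeastAtMost_iff continuous_at_imp_continuous_on)
  have "closed Z" unfolding Z_def
    by (rule continuous_on_closed_Collect_le[OF cont continuous_on_const]) simp
  moreover have "a \<in> Z" using t by (simp add: Z_def M_def)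
  moreover have Zb: "bdd_above Z" unfolding Z_def by (rule bdd_aboveI[of _ t]) auto
  ultimately have t0: "Sup Z \<in> Z" using closed_contains_Sup by blast
  define t0 where "t0 = Sup Z"
  have t0t: "a \<le> t0" "t0 < t" "s t0 \<le> M"
    using t0 big by (auto simp: Z_def t0_def less_le)
  have above: "M < s u" if "t0 < u" "u \<le> t" for u
  proof (rule ccontr)
    assume "\<not> M < s u"
    then have "u \<in> Z" using that t0t by (auto simp: Z_def)
    then show False using cSup_upper[OF _ Zb] that by (force simp: t0_def)
  qed
  have "s t \<le> s t0"
  proof (rule DERIV_nonpos_imp_decreasing_open[OF less_imp_le[OF t0t(2)]])
    fix x assume "t0 < x" "x < t"
    then show "\<exists>y. (s has_real_derivative y) (at x) \<and> y \<le> 0"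
      using der[of x] nonpos[of x] above[of x] t0t by (auto simp: M_def)
  next
    show "continuous_on {t0..t} s" by (rule continuous_on_subset[OF cont]) (use t0t in auto)
  qed
  then show False using big t0t by simp
qed

lemma bounded_below_descent_imp_small_rate:
  fixes V D :: "real \<Rightarrow> real"
  assumes der: "\<And>t. a \<le> t \<Longrightarrow> (V has_real_derivative - D t) (at t)"
    and bdd: "\<And>t. a \<le> t \<Longrightarrow> B \<le> V t" and eps: "0 < \<epsilon>"
  shows "\<exists>t\<ge>a. D t < \<epsilon>"
proof (rule ccontr)
  assume "\<not> ?thesis"
  then have D: "\<epsilon> \<le> D t" if "a \<le> t" for t using that by force
  define L where "L = (V a - B + 1) / \<epsilon>"
  have L: "0 \<le> L" "\<epsilon> * L = V a - B + 1" using bdd[of a] eps by (auto simp: L_def)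
  have "V (a + L) + \<epsilon> * (a + L) \<le> V a + \<epsilon> * a"
  proof (rule DERIV_nonpos_imp_nonincreasing[of a "a + L" "\<lambda>s. V s + \<epsilon> * s"])
    fix x assume x: "a \<le> x" "x \<le> a + L"
    have "((\<lambda>s. V s + \<epsilon> * s) has_real_derivative - D x + \<epsilon> * 1) (at x)"
      by (intro DERIV_add DERIV_cmult DERIV_ident der x)
    then show "\<exists>y. ((\<lambda>s. V s + \<epsilon> * s) has_real_derivative y) (at x) \<and> y \<le> 0"
      using D[OF x(1)] by auto
  qed (use L in simp)
  then have "V (a + L) < B" using L by (simp add: algebra_simps)
  with bdd[of "a + L"] L show False by simp
qed

lemma finite_bounded_imp_convergent_subsequence:
  fixes x :: "nat \<Rightarrow> 'a \<Rightarrow> real"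
  assumes "finite I" and "\<And>n i. i \<in> I \<Longrightarrow> \<bar>x n i\<bar> \<le> R"
  shows "\<exists>r p. strict_mono r \<and> (\<forall>i\<in>I. (\<lambda>n. x (r n) i) \<longlonglongrightarrow> p i)"
  using assms
proof (induction I rule: finite_induct)
  case empty
  then show ?case by (auto intro: strict_mono_id)
next
  case (insert a I)
  then obtain r p where r: "strict_mono r" and p: "\<forall>i\<in>I. (\<lambda>n. x (r n) i) \<longlonglongrightarrow> p i"
    by auto
  have "bounded (range (\<lambda>n. x (r n) a))"
    using insert.prems by (intro boundedI[of _ R]) auto
  then obtain l r' where r': "strict_mono r'" and l: "((\<lambda>n. x (r n) a) \<circ> r') \<longlonglongrightarrow> l"
    using bounded_imp_convergent_subsequence by blast
  have "(\<lambda>n. x ((r \<circ> r') n) i) \<longlonglongrightarrow> (p(a := l)) i" if "i \<in> insert a I" for i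
    using l p LIMSEQ_subseq_LIMSEQ[OF _ r'] that by (cases "i = a") (auto simp: o_def)
  then show ?case using strict_mono_o[OF r r'] by blast
qed

section \<open>The net supply of an agent\<close>

lemma xhat_mono_continuous:
  assumes lohi: "lo \<le> hi" and smono: "strict_mono_on {lo..hi} (vfun f \<phi>)"
    and cont: "continuous_on {lo..hi} (vfun f \<phi>)"
  shows "mono (xhat f \<phi> lo hi)" "continuous_on UNIV (xhat f \<phi> lo hi)"
    "xhat f \<phi> lo hi l \<in> {lo..hi}"
proof -
  let ?v = "vfun f \<phi>"
  define T where "T = the_inv_into {lo..hi} ?v"
  have inj: "inj_on ?v {lo..hi}" by (rule strict_mono_on_imp_inj_on[OF smono])
  have vmono: "?v x \<le> ?v y" if "lo \<le> x" "x \<le> y" "y \<le> hi" for x y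
    using smono that by (cases "x = y") (auto simp: strict_mono_on_def less_imp_le)
  have img: "?v ` {lo..hi} = {?v lo..?v hi}"
  proof
    show "?v ` {lo..hi} \<subseteq> {?v lo..?v hi}" using vmono by auto
    show "{?v lo..?v hi} \<subseteq> ?v ` {lo..hi}"
    proof
      fix l assume "l \<in> {?v lo..?v hi}"
      then obtain x where "lo \<le> x" "x \<le> hi" "?v x = l" using IVT'[of ?v lo l hi] cont lohi by auto
      then show "l \<in> ?v ` {lo..hi}" by auto
    qed
  qed
  have Tcont: "continuous_on {?v lo..?v hi} T"
    unfolding T_def img[symmetric] by (rule continuous_on_inv_into[OF cont compact_Icc inj])
  have Tin: "T l \<in> {lo..hi}" if "l \<in> {?v lo..?v hi}" for l
    unfolding T_def by (rule the_inv_into_into[OF inj]) (use img that in auto)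
  have vT: "?v (T l) = l" if "l \<in> {?v lo..?v hi}" for l
    unfolding T_def by (rule f_the_inv_into_f[OF inj]) (use img that in auto)
  have Tmono: "T l \<le> T l'" if "l \<in> {?v lo..?v hi}" "l' \<in> {?v lo..?v hi}" "l \<le> l'" for l l'
  proof (rule ccontr)
    assume "\<not> T l \<le> T l'"
    then have "?v (T l') < ?v (T l)"
      using Tin that smono by (auto simp: strict_mono_on_def)
    then show False using vT that by simp
  qed
  have vlohi: "?v lo \<le> ?v hi" using vmono lohi by simp
  define clip where "clip = (\<lambda>l. max (?v lo) (min (?v hi) l))"
  have clip: "clip l \<in> {?v lo..?v hi}" for l unfolding clip_def using vlohi by auto
  have xhat_eq: "xhat f \<phi> lo hi l = T (clip l)" for l
  proof -
    have "T (?v lo) = lo" "T (?v hi) = hi"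
      unfolding T_def using inj lohi by (auto intro!: the_inv_into_f_f)
    then show ?thesis
      unfolding xhat_def T_def clip_def using vlohi by auto
  qed
  show "mono (xhat f \<phi> lo hi)"
  proof (rule monoI)
    fix l l' :: real assume "l \<le> l'"
    then show "xhat f \<phi> lo hi l \<le> xhat f \<phi> lo hi l'"
      unfolding xhat_eq by (intro Tmono[OF clip clip]) (use vlohi in \<open>auto simp: clip_def\<close>)
  qed
  have "continuous_on UNIV (\<lambda>l. T (clip l))"
    by (rule continuous_on_compose2[OF Tcont]) (use clip in \<open>auto simp: clip_def intro!: continuous_intros\<close>)
  then show "continuous_on UNIV (xhat f \<phi> lo hi)" by (simp add: xhat_eq)
  show "xhat f \<phi> lo hi l \<in> {lo..hi}" using Tin[OF clip] by (simp add: xhat_eq)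
qed

definition net_supply :: "(real \<Rightarrow> real) \<Rightarrow> (real \<Rightarrow> real) \<Rightarrow> real \<Rightarrow> real \<Rightarrow> real \<Rightarrow> real" where
  "net_supply f \<phi> lo hi l = xhat f \<phi> lo hi l - \<phi> (xhat f \<phi> lo hi l)"

locale agent =
  fixes f \<phi> :: "real \<Rightarrow> real" and lo hi :: real
  assumes interval: "lo \<le> hi"
    and f_C1: "f C1_differentiable_on UNIV"
    and phi_C1: "\<phi> C1_differentiable_on UNIV"
    and f_strictly_convex: "strictly_convex_on {lo..hi} f"
    and phi_convex: "convex_on {lo..hi} \<phi>"
    and phi_deriv_less_1: "\<And>x. x \<in> {lo..hi} \<Longrightarrow> deriv \<phi> x < 1"
    and f_deriv_pos: "\<And>x. x \<in> {lo..hi} \<Longrightarrow> deriv f x > 0"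
begin

lemma vfun_strict_mono_on: "strict_mono_on {lo..hi} (vfun f \<phi>)"
proof (rule strict_mono_onI)
  obtain F where F: "\<And>x. (f has_real_derivative F x) (at x)" "continuous_on UNIV F"
    and F_eq: "\<And>x. deriv f x = F x" using C1_differentiable_on_UNIV_derivE[OF f_C1] by metis
  obtain P where P: "\<And>x. (\<phi> has_real_derivative P x) (at x)" "continuous_on UNIV P"
    and P_eq: "\<And>x. deriv \<phi> x = P x" using C1_differentiable_on_UNIV_derivE[OF phi_C1] by metis
  fix x y assume xy: "x \<in> {lo..hi}" "y \<in> {lo..hi}" "x < y"
  have "F x < F y"
    by (rule strictly_convex_on_deriv_strict_mono[OF f_strictly_convex F]) (use xy in auto)
  moreover have "P x \<le> P y"
    by (rule convex_on_deriv_mono[OF phi_convex P]) (use xy in auto)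
  moreover have "0 < F x" "P y < 1"
    using f_deriv_pos[of x] phi_deriv_less_1[of y] xy by (simp_all add: F_eq P_eq)
  ultimately have "F x / (1 - P x) \<le> F x / (1 - P y)" "F x / (1 - P y) < F y / (1 - P y)"
    by (auto intro!: divide_left_mono divide_strict_right_mono)
  then show "vfun f \<phi> x < vfun f \<phi> y" by (simp add: vfun_def F_eq P_eq)
qed

lemma vfun_continuous_on: "continuous_on {lo..hi} (vfun f \<phi>)"
proof -
  obtain F where "\<And>x. (f has_real_derivative F x) (at x)" and F: "continuous_on UNIV F"
    and F_eq: "\<And>x. deriv f x = F x" using C1_differentiable_on_UNIV_derivE[OF f_C1] by metis
  obtain P where "\<And>x. (\<phi> has_real_derivative P x) (at x)" and P: "continuous_on UNIV P"
    and P_eq: "\<And>x. deriv \<phi> x = P x" using C1_differentiable_on_UNIV_derivE[OF phi_C1] by metis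
  have "continuous_on {lo..hi} (\<lambda>x. F x / (1 - P x))"
  proof (rule continuous_on_divide)
    show "continuous_on {lo..hi} F" "continuous_on {lo..hi} (\<lambda>x. 1 - P x)"
      by (auto intro!: continuous_on_diff continuous_on_subset[OF F] continuous_on_subset[OF P])
    show "\<forall>x\<in>{lo..hi}. 1 - P x \<noteq> 0" using phi_deriv_less_1 by (force simp: P_eq)
  qed
  then show ?thesis by (simp add: vfun_def F_eq P_eq)
qed

lemmas xhat_mono = xhat_mono_continuous(1)[OF interval vfun_strict_mono_on vfun_continuous_on]
  and xhat_continuous = xhat_mono_continuous(2)[OF interval vfun_strict_mono_on vfun_continuous_on]
  and xhat_in_interval = xhat_mono_continuous(3)[OF interval vfun_strict_mono_on vfun_continuous_on]

lemma net_supply_mono: "mono (net_supply f \<phi> lo hi)"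
proof -
  obtain P where P: "\<And>x. (\<phi> has_real_derivative P x) (at x)" and "continuous_on UNIV P"
    and P_eq: "\<And>x. deriv \<phi> x = P x" using C1_differentiable_on_UNIV_derivE[OF phi_C1] by metis
  have mono_xphi: "x - \<phi> x \<le> y - \<phi> y" if "lo \<le> x" "x \<le> y" "y \<le> hi" for x y
  proof (rule DERIV_nonneg_imp_nondecreasing[OF that(2)])
    fix z assume "x \<le> z" "z \<le> y"
    then have "P z < 1" using that phi_deriv_less_1[of z] by (simp add: P_eq)
    then show "\<exists>D. ((\<lambda>x. x - \<phi> x) has_real_derivative D) (at z) \<and> 0 \<le> D"
      by (intro exI[of _ "1 - P z"]) (auto intro!: derivative_eq_intros P)
  qed
  show ?thesis
  proof (rule monoI)
    fix l l' :: real assume "l \<le> l'"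
    then have "xhat f \<phi> lo hi l \<le> xhat f \<phi> lo hi l'" by (rule monoD[OF xhat_mono])
    then show "net_supply f \<phi> lo hi l \<le> net_supply f \<phi> lo hi l'"
      unfolding net_supply_def using xhat_in_interval[of l] xhat_in_interval[of l'] mono_xphi by simp
  qed
qed

lemma net_supply_continuous: "continuous_on UNIV (net_supply f \<phi> lo hi)"
proof -
  have "continuous_on UNIV \<phi>"
    using C1_differentiable_imp_continuous_on[OF phi_C1] .
  then show ?thesis unfolding net_supply_def
    by (intro continuous_intros xhat_continuous continuous_on_compose2[OF _ xhat_continuous]) auto
qed

lemma net_supply_below: "l \<le> vfun f \<phi> lo \<Longrightarrow> net_supply f \<phi> lo hi l = lo - \<phi> lo"
  by (simp add: net_supply_def xhat_def)

lemma net_supply_above: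
  assumes "vfun f \<phi> hi \<le> l"
  shows "net_supply f \<phi> lo hi l = hi - \<phi> hi"
proof (cases "l \<le> vfun f \<phi> lo")
  case True
  then have "\<not> vfun f \<phi> lo < vfun f \<phi> hi" using assms by linarith
  then have "\<not> lo < hi" using vfun_strict_mono_on by (auto simp: strict_mono_on_def)
  then have "lo = hi" using interval by simp
  moreover from True have "net_supply f \<phi> lo hi l = lo - \<phi> lo" by (rule net_supply_below)
  ultimately show ?thesis by simp
qed (use assms in \<open>simp add: net_supply_def xhat_def\<close>)

end

section \<open>Diffusion on an undirected graph\<close>

definition diffusion :: "('a \<times> 'a) set \<Rightarrow> ('a \<Rightarrow> real) \<Rightarrow> 'a \<Rightarrow> real" where
  "diffusion E y i = (\<Sum>j\<in>{j. (j, i) \<in> E}. y j - y i)"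

definition disagreement :: "'a set \<Rightarrow> ('a \<times> 'a) set \<Rightarrow> ('a \<Rightarrow> real) \<Rightarrow> real" where
  "disagreement I E y = (\<Sum>i\<in>I. \<Sum>j\<in>{j. (j, i) \<in> E}. (y i - y j)\<^sup>2)"

lemma disagreement_nonneg: "0 \<le> disagreement I E y"
  unfolding disagreement_def by (intro sum_nonneg) auto

lemma sum_neighbours_swap:
  fixes F :: "'a \<Rightarrow> 'a \<Rightarrow> real"
  assumes fin: "finite I" and EI: "E \<subseteq> I \<times> I" and sym: "sym E"
  shows "(\<Sum>i\<in>I. \<Sum>j\<in>{j. (j, i) \<in> E}. F i j) = (\<Sum>i\<in>I. \<Sum>j\<in>{j. (j, i) \<in> E}. F j i)"
proof -
  have fin_nb: "finite {j. (j, i) \<in> E}" for i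
    by (rule finite_subset[OF _ fin]) (use EI in auto)
  have "(\<Sum>i\<in>I. \<Sum>j\<in>{j. (j, i) \<in> E}. F i j) = (\<Sum>(i, j)\<in>Sigma I (\<lambda>i. {j. (j, i) \<in> E}). F i j)"
    by (rule sum.Sigma[OF fin]) (simp add: fin_nb)
  also have "\<dots> = (\<Sum>(i, j)\<in>Sigma I (\<lambda>i. {j. (j, i) \<in> E}). F j i)"
    by (rule sum.reindex_bij_witness[of _ "\<lambda>(a, b). (b, a)" "\<lambda>(a, b). (b, a)"])
      (use EI sym in \<open>auto dest: symD\<close>)
  also have "\<dots> = (\<Sum>i\<in>I. \<Sum>j\<in>{j. (j, i) \<in> E}. F j i)"
    by (rule sum.Sigma[OF fin, symmetric]) (simp add: fin_nb)
  finally show ?thesis .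
qed

lemma sum_diffusion_eq_0:
  assumes "finite I" "E \<subseteq> I \<times> I" "sym E"
  shows "(\<Sum>i\<in>I. diffusion E y i) = 0"
proof -
  have "(\<Sum>i\<in>I. diffusion E y i) = (\<Sum>i\<in>I. \<Sum>j\<in>{j. (j, i) \<in> E}. y i - y j)"
    unfolding diffusion_def by (rule sum_neighbours_swap[OF assms])
  also have "\<dots> = - (\<Sum>i\<in>I. diffusion E y i)"
    by (simp add: diffusion_def sum_negf[symmetric])
  finally show ?thesis by simp
qed

lemma sum_mult_diffusion:
  assumes "finite I" "E \<subseteq> I \<times> I" "sym E"
  shows "(\<Sum>i\<in>I. x i * diffusion E y i)
     = - (1/2) * (\<Sum>i\<in>I. \<Sum>j\<in>{j. (j, i) \<in> E}. (x i - x j) * (y i - y j))"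
proof -
  have swap: "(\<Sum>i\<in>I. \<Sum>j\<in>{j. (j, i) \<in> E}. x j * (y i - y j))
      = (\<Sum>i\<in>I. \<Sum>j\<in>{j. (j, i) \<in> E}. x i * (y j - y i))"
    by (rule sum_neighbours_swap[OF assms])
  have "(\<Sum>i\<in>I. \<Sum>j\<in>{j. (j, i) \<in> E}. (x i - x j) * (y i - y j))
      = (\<Sum>i\<in>I. \<Sum>j\<in>{j. (j, i) \<in> E}. x i * (y i - y j))
        - (\<Sum>i\<in>I. \<Sum>j\<in>{j. (j, i) \<in> E}. x j * (y i - y j))"
    by (simp add: left_diff_distrib sum_subtractf)
  also have "\<dots> = -2 * (\<Sum>i\<in>I. \<Sum>j\<in>{j. (j, i) \<in> E}. x i * (y j - y i))"
    unfolding swap by (simp add: algebra_simps sum_subtractf sum_negf[symmetric])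
  finally show ?thesis by (simp add: diffusion_def sum_distrib_left)
qed

lemma abs_diff_le_sqrt_disagreement:
  assumes "finite I" "E \<subseteq> I \<times> I" and ab: "(a, b) \<in> E"
  shows "\<bar>y a - y b\<bar> \<le> sqrt (disagreement I E y)"
proof -
  have b: "b \<in> I" using ab assms(2) by auto
  have fin_nb: "finite {j. (j, b) \<in> E}"
    by (rule finite_subset[OF _ assms(1)]) (use assms(2) in auto)
  have "(y b - y a)\<^sup>2 \<le> (\<Sum>j\<in>{j. (j, b) \<in> E}. (y b - y j)\<^sup>2)"
    by (rule member_le_sum[OF _ _ fin_nb]) (use ab in auto)
  also have "\<dots> \<le> disagreement I E y" unfolding disagreement_def
    by (rule member_le_sum[OF b _ assms(1)]) (auto intro: sum_nonneg)
  finally have "\<bar>y a - y b\<bar>\<^sup>2 \<le> disagreement I E y" by (simp add: power2_commute)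
  then show ?thesis by (rule real_le_rsqrt)
qed

lemma relpow_abs_diff_le:
  fixes y :: "'a \<Rightarrow> real"
  assumes "(p, q) \<in> E ^^ n" and "\<And>a b. (a, b) \<in> E \<Longrightarrow> \<bar>y a - y b\<bar> \<le> B"
  shows "\<bar>y p - y q\<bar> \<le> real n * B"
  using assms(1)
proof (induction n arbitrary: q)
  case (Suc n)
  from Suc.prems obtain z where "(p, z) \<in> E ^^ n" "(z, q) \<in> E" by (rule relpow_Suc_E)
  then have "\<bar>y p - y z\<bar> \<le> real n * B" "\<bar>y z - y q\<bar> \<le> B" using Suc.IH assms(2) by auto
  then show ?case by (simp add: algebra_simps)
qed simp

lemma connected_abs_diff_le_disagreement:
  assumes fin: "finite I" and EI: "E \<subseteq> I \<times> I"
    and conn: "\<And>i j. i \<in> I \<Longrightarrow> j \<in> I \<Longrightarrow> (i, j) \<in> E\<^sup>*"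
  obtains K where "0 \<le> K"
    "\<And>y i j. i \<in> I \<Longrightarrow> j \<in> I \<Longrightarrow> \<bar>y i - y j\<bar> \<le> K * sqrt (disagreement I E y)"
proof -
  have "\<forall>p\<in>I \<times> I. \<exists>n. p \<in> E ^^ n" using conn rtrancl_power by blast
  then obtain len where len: "\<And>p. p \<in> I \<times> I \<Longrightarrow> p \<in> E ^^ len p" by metis
  define K where "K = (\<Sum>p\<in>I \<times> I. real (len p))"
  show thesis
  proof (rule that)
    show "0 \<le> K" unfolding K_def by (intro sum_nonneg) auto
    fix y i j assume ij: "i \<in> I" "j \<in> I"
    have "\<bar>y i - y j\<bar> \<le> real (len (i, j)) * sqrt (disagreement I E y)"
      by (rule relpow_abs_diff_le[OF len abs_diff_le_sqrt_disagreement[OF fin EI]]) (use ij in auto)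
    also have "\<dots> \<le> K * sqrt (disagreement I E y)" unfolding K_def
      by (intro mult_right_mono member_le_sum) (use ij fin disagreement_nonneg in auto)
    finally show "\<bar>y i - y j\<bar> \<le> K * sqrt (disagreement I E y)" .
  qed
qed

section \<open>Saturated consensus dynamics\<close>

locale consensus_field =
  fixes I :: "'a set" and E :: "('a \<times> 'a) set" and d :: "'a \<Rightarrow> real"
    and g :: "'a \<Rightarrow> real \<Rightarrow> real" and k R :: real
  assumes finite: "finite I" and nonempty: "I \<noteq> {}"
    and edges: "E \<subseteq> I \<times> I" and undirected: "sym E"
    and connected: "\<And>i j. i \<in> I \<Longrightarrow> j \<in> I \<Longrightarrow> (i, j) \<in> E\<^sup>*"
    and g_continuous: "\<And>i. i \<in> I \<Longrightarrow> continuous_on UNIV (g i)"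
    and g_mono: "\<And>i. i \<in> I \<Longrightarrow> mono (g i)"
    and R_nonneg: "0 \<le> R"
    and g_below: "\<And>i l. i \<in> I \<Longrightarrow> l \<le> -R \<Longrightarrow> g i l = g i (-R)"
    and g_above: "\<And>i l. i \<in> I \<Longrightarrow> R \<le> l \<Longrightarrow> g i l = g i R"
    and feasible_below: "(\<Sum>i\<in>I. g i (-R)) \<le> (\<Sum>i\<in>I. d i)"
    and feasible_above: "(\<Sum>i\<in>I. d i) \<le> (\<Sum>i\<in>I. g i R)"
    and k_pos: "0 < k"
begin

definition velocity :: "('a \<Rightarrow> real) \<Rightarrow> 'a \<Rightarrow> real" where
  "velocity y i = d i - g i (y i) + k * diffusion E y i"

text \<open>A potential for minus the velocity: the factor \<open>1/4\<close> compensates for every edge being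
  counted in both directions by the disagreement and for the derivative of the square.\<close>
definition energy :: "('a \<Rightarrow> real) \<Rightarrow> real" where
  "energy y = (\<Sum>i\<in>I. primitive (g i) (y i) - d i * y i) + k / 4 * disagreement I E y"

lemma sum_velocity: "(\<Sum>i\<in>I. velocity y i) = (\<Sum>i\<in>I. d i) - (\<Sum>i\<in>I. g i (y i))"
  using sum_diffusion_eq_0[OF finite edges undirected, of y]
  by (simp add: velocity_def sum.distrib sum_subtractf sum_distrib_left[symmetric])

lemma velocity_dissipative: "(\<Sum>i\<in>I. (x i - y i) * (velocity x i - velocity y i)) \<le> 0"
proof -
  define e where "e i = x i - y i" for i
  have diff: "diffusion E e i = diffusion E x i - diffusion E y i" for i
    by (simp add: diffusion_def e_def sum_subtractf[symmetric] algebra_simps)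
  have vel: "velocity x i - velocity y i = k * diffusion E e i - (g i (x i) - g i (y i))" for i
    unfolding velocity_def diff by (simp add: algebra_simps)
  have "(x i - y i) * (velocity x i - velocity y i)
      = k * (e i * diffusion E e i) - (x i - y i) * (g i (x i) - g i (y i))" for i
    unfolding vel by (simp add: e_def algebra_simps)
  then have "(\<Sum>i\<in>I. (x i - y i) * (velocity x i - velocity y i))
      = k * (\<Sum>i\<in>I. e i * diffusion E e i) - (\<Sum>i\<in>I. (x i - y i) * (g i (x i) - g i (y i)))"
    by (simp add: sum_subtractf sum_distrib_left)
  moreover have "(\<Sum>i\<in>I. e i * diffusion E e i)
      = - (1/2) * (\<Sum>i\<in>I. \<Sum>j\<in>{j. (j, i) \<in> E}. (e i - e j)\<^sup>2)"
    unfolding sum_mult_diffusion[OF finite edges undirected] by (simp add: power2_eq_square)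
  moreover have "0 \<le> k * (\<Sum>i\<in>I. \<Sum>j\<in>{j. (j, i) \<in> E}. (e i - e j)\<^sup>2)"
    using k_pos by (simp add: sum_nonneg)
  moreover have "0 \<le> (\<Sum>i\<in>I. (x i - y i) * (g i (x i) - g i (y i)))"
    by (intro sum_nonneg mono_imp_mult_diff_nonneg g_mono)
  ultimately show ?thesis by simp
qed

lemma g_bounded:
  obtains M where "0 \<le> M" "\<And>i l. i \<in> I \<Longrightarrow> \<bar>g i l\<bar> \<le> M"
proof
  define M where "M = (\<Sum>i\<in>I. \<bar>g i (-R)\<bar> + \<bar>g i R\<bar>)"
  show "0 \<le> M" unfolding M_def by (intro sum_nonneg) auto
  fix i l assume i: "i \<in> I"
  have "g i (-R) \<le> g i l"
  proof (cases "l \<le> -R")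
    case True
    then show ?thesis using g_below[OF i True] by simp
  qed (simp add: monoD[OF g_mono[OF i]])
  moreover have "g i l \<le> g i R"
  proof (cases "R \<le> l")
    case True
    then show ?thesis using g_above[OF i True] by simp
  qed (simp add: monoD[OF g_mono[OF i]])
  moreover have "\<bar>g i (-R)\<bar> + \<bar>g i R\<bar> \<le> M"
    unfolding M_def by (rule member_le_sum[OF i _ finite]) auto
  ultimately show "\<bar>g i l\<bar> \<le> M" by linarith
qed

lemma energy_has_real_derivative:
  assumes Y: "\<And>i. i \<in> I \<Longrightarrow> ((\<lambda>s. Y s i) has_real_derivative Y' i) (at t)"
  shows "((\<lambda>s. energy (Y s)) has_real_derivative - (\<Sum>i\<in>I. velocity (Y t) i * Y' i)) (at t)"
proof -
  define a where "a i = d i * Y' i - g i (Y t i) * Y' i" for i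
  define P where "P = (\<Sum>i\<in>I. Y' i * diffusion E (Y t) i)"
  have dP: "((\<lambda>s. primitive (g i) (Y s i) - d i * Y s i) has_real_derivative - a i) (at t)"
    if i: "i \<in> I" for i
  proof -
    have "((\<lambda>s. primitive (g i) (Y s i) - d i * Y s i) has_real_derivative
        g i (Y t i) * Y' i - d i * Y' i) (at t)"
      by (intro DERIV_diff DERIV_cmult Y[OF i]
          DERIV_chain2[OF primitive_has_real_derivative[OF g_continuous[OF i]]])
    then show ?thesis by (simp add: a_def)
  qed
  have dQ: "((\<lambda>s. (Y s i - Y s j)\<^sup>2) has_real_derivative 2 * (Y t i - Y t j) * (Y' i - Y' j)) (at t)"
    if "i \<in> I" "(j, i) \<in> E" for i j
  proof -
    have "j \<in> I" using that(2) edges by auto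
    then show ?thesis
      using DERIV_power[OF DERIV_diff[OF Y[OF that(1)] Y], of j 2] by (simp add: algebra_simps)
  qed
  have "((\<lambda>s. energy (Y s)) has_real_derivative (\<Sum>i\<in>I. - a i)
      + k / 4 * (\<Sum>i\<in>I. \<Sum>j\<in>{j. (j, i) \<in> E}. 2 * (Y t i - Y t j) * (Y' i - Y' j))) (at t)"
    unfolding energy_def disagreement_def by (intro DERIV_add DERIV_sum DERIV_cmult dP dQ) auto
  moreover have "(\<Sum>i\<in>I. \<Sum>j\<in>{j. (j, i) \<in> E}. 2 * (Y t i - Y t j) * (Y' i - Y' j))
      = 2 * (\<Sum>i\<in>I. \<Sum>j\<in>{j. (j, i) \<in> E}. (Y' i - Y' j) * (Y t i - Y t j))"
    unfolding sum_distrib_left by (intro sum.cong refl) (simp add: algebra_simps)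
  moreover have "(\<Sum>i\<in>I. \<Sum>j\<in>{j. (j, i) \<in> E}. (Y' i - Y' j) * (Y t i - Y t j)) = -2 * P"
    unfolding P_def sum_mult_diffusion[OF finite edges undirected] by simp
  moreover have "velocity (Y t) i * Y' i = a i + k * (Y' i * diffusion E (Y t) i)" for i
    by (simp add: velocity_def a_def algebra_simps)
  then have "(\<Sum>i\<in>I. velocity (Y t) i * Y' i) = (\<Sum>i\<in>I. a i) + k * P"
    by (simp add: P_def sum.distrib sum_distrib_left)
  ultimately show ?thesis by (simp add: sum_negf diff_minus_eq_add add.commute)
qed

text \<open>Along the consensus direction the energy is a convex function of the common value whose
  slope changes sign on \<open>[-R, R]\<close> by feasibility; off it, the primitives are Lipschitz and the
  deviation from consensus is controlled by the disagreement.\<close>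
lemma energy_lower_bound:
  obtains A B where "0 \<le> A"
    "\<And>y. B - A * sqrt (disagreement I E y) + k / 4 * disagreement I E y \<le> energy y"
proof -
  obtain M where M: "0 \<le> M" "\<And>i l. i \<in> I \<Longrightarrow> \<bar>g i l\<bar> \<le> M"
    using g_bounded by metis
  obtain K where K: "0 \<le> K"
    "\<And>y i j. i \<in> I \<Longrightarrow> j \<in> I \<Longrightarrow> \<bar>y i - y j\<bar> \<le> K * sqrt (disagreement I E y)"
    using connected_abs_diff_le_disagreement[OF finite edges connected] by metis
  have lipschitz: "\<bar>primitive (g i) u - primitive (g i) v\<bar> \<le> M * \<bar>u - v\<bar>" if i: "i \<in> I" for i u v
    using field_differentiable_bound[of UNIV "primitive (g i)" "g i" M u v]
      primitive_has_real_derivative[OF g_continuous[OF i]] M(2)[OF i] by auto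
  define H where "H c = (\<Sum>i\<in>I. primitive (g i) c - d i * c)" for c
  define h where "h c = (\<Sum>i\<in>I. g i c) - (\<Sum>i\<in>I. d i)" for c
  obtain c0 where c0: "\<And>c. H c0 \<le> H c"
  proof (rule DERIV_mono_imp_global_min[of H h])
    show "(H has_real_derivative h c) (at c)" for c
    proof -
      have "(H has_real_derivative (\<Sum>i\<in>I. g i c - d i * 1)) (at c)"
        unfolding H_def
        by (intro DERIV_sum DERIV_diff DERIV_cmult DERIV_ident primitive_has_real_derivative
            g_continuous)
      then show ?thesis by (simp add: h_def sum_subtractf)
    qed
    show "mono h" unfolding h_def by (intro monoI diff_right_mono sum_mono monoD[OF g_mono])
    show "continuous_on {-R..R} h" unfolding h_def
      by (intro continuous_intros continuous_on_subset[OF g_continuous]) auto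
  qed (use R_nonneg feasible_below feasible_above in \<open>auto simp: h_def\<close>)
  obtain i0 where i0: "i0 \<in> I" using nonempty by blast
  define C where "C = (\<Sum>i\<in>I. M + \<bar>d i\<bar>)"
  show thesis
  proof (rule that)
    show "0 \<le> C * K" unfolding C_def using M(1) K(1) by (intro mult_nonneg_nonneg sum_nonneg) auto
    fix y
    let ?q = "sqrt (disagreement I E y)" and ?c = "y i0"
    have summand: "primitive (g i) ?c - d i * ?c - (M + \<bar>d i\<bar>) * (K * ?q)
        \<le> primitive (g i) (y i) - d i * y i" if i: "i \<in> I" for i
    proof -
      have dev: "\<bar>y i - ?c\<bar> \<le> K * ?q" using K(2)[OF i i0] .
      have "primitive (g i) ?c - M * \<bar>y i - ?c\<bar> \<le> primitive (g i) (y i)"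
        using lipschitz[OF i, of "y i" ?c] by linarith
      moreover have "d i * (y i - ?c) \<le> \<bar>d i\<bar> * \<bar>y i - ?c\<bar>"
        by (metis abs_ge_self abs_mult)
      moreover have "(M + \<bar>d i\<bar>) * \<bar>y i - ?c\<bar> \<le> (M + \<bar>d i\<bar>) * (K * ?q)"
        using dev M(1) by (intro mult_left_mono) auto
      ultimately show ?thesis by (simp add: algebra_simps)
    qed
    have "H ?c - C * K * ?q = (\<Sum>i\<in>I. primitive (g i) ?c - d i * ?c - (M + \<bar>d i\<bar>) * (K * ?q))"
      by (simp add: H_def C_def sum_subtractf sum_distrib_right mult.assoc)
    also have "\<dots> \<le> (\<Sum>i\<in>I. primitive (g i) (y i) - d i * y i)"
      by (rule sum_mono) (rule summand)
    finally show "H c0 - C * K * ?q + k / 4 * disagreement I E y \<le> energy y"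
      using c0[of ?c] by (simp add: energy_def)
  qed
qed

end

locale consensus_trajectory = consensus_field +
  fixes \<Lambda> :: "real \<Rightarrow> 'a \<Rightarrow> real"
  assumes trajectory:
    "\<And>i t. i \<in> I \<Longrightarrow> 0 < t \<Longrightarrow> ((\<lambda>s. \<Lambda> s i) has_real_derivative velocity (\<Lambda> t) i) (at t)"
begin

lemma energy_trajectory_has_real_derivative:
  assumes "0 < t"
  shows "((\<lambda>s. energy (\<Lambda> s)) has_real_derivative - (\<Sum>i\<in>I. (velocity (\<Lambda> t) i)\<^sup>2)) (at t)"
  using energy_has_real_derivative[of "\<lambda>s i. \<Lambda> s i", OF trajectory[OF _ assms]]
  by (simp add: power2_eq_square)

lemma energy_trajectory_antimono:
  assumes "0 < u" "u \<le> t"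
  shows "energy (\<Lambda> t) \<le> energy (\<Lambda> u)"
proof (rule DERIV_nonpos_imp_nonincreasing[OF assms(2)])
  fix s assume "u \<le> s" "s \<le> t"
  then show "\<exists>D. ((\<lambda>s. energy (\<Lambda> s)) has_real_derivative D) (at s) \<and> D \<le> 0"
    using energy_trajectory_has_real_derivative[of s] assms
    by (intro exI[of _ "- (\<Sum>i\<in>I. (velocity (\<Lambda> s) i)\<^sup>2)"]) (auto intro: sum_nonneg)
qed

lemma disagreement_trajectory_bounded:
  obtains B where "\<And>t. 1 \<le> t \<Longrightarrow> sqrt (disagreement I E (\<Lambda> t)) \<le> B"
proof -
  obtain A B where A: "0 \<le> A"
    and AB: "\<And>y. B - A * sqrt (disagreement I E y) + k / 4 * disagreement I E y \<le> energy y"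
    using energy_lower_bound by metis
  show thesis
  proof (rule that)
    fix t :: real assume t: "1 \<le> t"
    let ?q = "sqrt (disagreement I E (\<Lambda> t))"
    have "k / 4 * ?q\<^sup>2 - A * ?q \<le> energy (\<Lambda> 1) - B"
      using AB[of "\<Lambda> t"] energy_trajectory_antimono[OF _ t] real_sqrt_pow2[OF disagreement_nonneg[of I E "\<Lambda> t"]]
      by simp
    then show "?q \<le> 1 + (A + \<bar>energy (\<Lambda> 1) - B\<bar>) / (k / 4)"
      by (rule quadratic_le_imp_bounded[rotated 2]) (use k_pos A in auto)
  qed
qed

lemma trajectory_spread_bounded:
  obtains S where "\<And>t i j. 1 \<le> t \<Longrightarrow> i \<in> I \<Longrightarrow> j \<in> I \<Longrightarrow> \<bar>\<Lambda> t i - \<Lambda> t j\<bar> \<le> S"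
proof -
  obtain K where K: "0 \<le> K"
    "\<And>y i j. i \<in> I \<Longrightarrow> j \<in> I \<Longrightarrow> \<bar>y i - y j\<bar> \<le> K * sqrt (disagreement I E y)"
    using connected_abs_diff_le_disagreement[OF finite edges connected] by metis
  obtain B where B: "\<And>t. 1 \<le> t \<Longrightarrow> sqrt (disagreement I E (\<Lambda> t)) \<le> B"
    using disagreement_trajectory_bounded by metis
  show thesis
  proof (rule that)
    fix t :: real and i j assume "1 \<le> t" "i \<in> I" "j \<in> I"
    then show "\<bar>\<Lambda> t i - \<Lambda> t j\<bar> \<le> K * B"
      using K(2)[of i j "\<Lambda> t"] mult_left_mono[OF B K(1)] by fastforce
  qed
qed

text \<open>With the spread bounded, a large sum of the multipliers forces all of them above \<open>R\<close>,
  where feasibility makes the sum nonincreasing; symmetrically below \<open>-R\<close>.\<close>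
lemma trajectory_bounded:
  obtains B where "\<And>t i. 1 \<le> t \<Longrightarrow> i \<in> I \<Longrightarrow> \<bar>\<Lambda> t i\<bar> \<le> B"
proof -
  obtain S where S: "\<And>t i j. 1 \<le> t \<Longrightarrow> i \<in> I \<Longrightarrow> j \<in> I \<Longrightarrow> \<bar>\<Lambda> t i - \<Lambda> t j\<bar> \<le> S"
    using trajectory_spread_bounded by metis
  define n where "n = real (card I)"
  have n: "0 < n" using finite nonempty by (simp add: n_def card_gt_0_iff)
  define sm where "sm t = (\<Sum>i\<in>I. \<Lambda> t i)" for t
  have mean: "\<bar>n * \<Lambda> t i - sm t\<bar> \<le> n * S" if t: "1 \<le> t" and i: "i \<in> I" for t i
  proof -
    have "n * \<Lambda> t i - sm t = (\<Sum>j\<in>I. \<Lambda> t i - \<Lambda> t j)"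
      by (simp add: n_def sm_def sum_subtractf)
    also have "\<bar>\<dots>\<bar> \<le> (\<Sum>j\<in>I. \<bar>\<Lambda> t i - \<Lambda> t j\<bar>)" by (rule sum_abs)
    also have "\<dots> \<le> (\<Sum>j\<in>I. S)" by (intro sum_mono S t i)
    finally show ?thesis by (simp add: n_def)
  qed
  have sm_deriv: "(sm has_real_derivative (\<Sum>i\<in>I. d i) - (\<Sum>i\<in>I. g i (\<Lambda> t i))) (at t)"
    if "1 \<le> t" for t
    unfolding sm_def sum_velocity[symmetric] using that by (intro DERIV_sum trajectory) auto
  define T where "T = n * (R + S)"
  have upper: "sm t \<le> max (sm 1) T" if "1 \<le> t" for t
  proof (rule DERIV_nonpos_above_imp_le_max[OF sm_deriv _ that])
    fix u assume u: "1 \<le> u" "T < sm u"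
    have "R \<le> \<Lambda> u i" if i: "i \<in> I" for i
    proof -
      have "n * R < n * \<Lambda> u i" using mean[OF u(1) i] u(2) by (simp add: T_def algebra_simps)
      then show ?thesis using n by simp
    qed
    then have "(\<Sum>i\<in>I. g i (\<Lambda> u i)) = (\<Sum>i\<in>I. g i R)"
      by (intro sum.cong refl g_above)
    then show "(\<Sum>i\<in>I. d i) - (\<Sum>i\<in>I. g i (\<Lambda> u i)) \<le> 0" using feasible_above by simp
  qed
  have lower: "- sm t \<le> max (- sm 1) T" if "1 \<le> t" for t
  proof (rule DERIV_nonpos_above_imp_le_max[OF DERIV_minus[OF sm_deriv] _ that])
    fix u assume u: "1 \<le> u" "T < - sm u"
    have "\<Lambda> u i \<le> -R" if i: "i \<in> I" for i
    proof -
      have "n * \<Lambda> u i < n * (-R)" using mean[OF u(1) i] u(2) by (simp add: T_def algebra_simps)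
      then show ?thesis using n mult_less_cancel_left_pos[of n "\<Lambda> u i" "-R"] by linarith
    qed
    then have "(\<Sum>i\<in>I. g i (\<Lambda> u i)) = (\<Sum>i\<in>I. g i (-R))"
      by (intro sum.cong refl g_below)
    then show "- ((\<Sum>i\<in>I. d i) - (\<Sum>i\<in>I. g i (\<Lambda> u i))) \<le> 0" using feasible_below by simp
  qed
  show thesis
  proof (rule that)
    fix t :: real and i assume t: "1 \<le> t" and i: "i \<in> I"
    have "\<bar>sm t\<bar> \<le> \<bar>sm 1\<bar> + \<bar>T\<bar>" using upper[OF t] lower[OF t] by linarith
    then have "\<bar>n * \<Lambda> t i\<bar> \<le> \<bar>sm 1\<bar> + \<bar>T\<bar> + n * S" using mean[OF t i] by linarith
    then have "n * \<bar>\<Lambda> t i\<bar> \<le> \<bar>sm 1\<bar> + \<bar>T\<bar> + n * S" using n by (simp add: abs_mult)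
    then show "\<bar>\<Lambda> t i\<bar> \<le> (\<bar>sm 1\<bar> + \<bar>T\<bar>) / n + S" using n by (simp add: field_simps)
  qed
qed

lemma velocity_vanishes_along_sequence:
  obtains \<tau> where "\<And>n. 1 \<le> \<tau> n" "\<And>i. i \<in> I \<Longrightarrow> (\<lambda>n. velocity (\<Lambda> (\<tau> n)) i) \<longlonglongrightarrow> 0"
proof -
  define D where "D t = (\<Sum>i\<in>I. (velocity (\<Lambda> t) i)\<^sup>2)" for t
  obtain A B where A: "0 \<le> A"
    and AB: "\<And>y. B - A * sqrt (disagreement I E y) + k / 4 * disagreement I E y \<le> energy y"
    using energy_lower_bound by metis
  obtain Q where Q: "\<And>t. 1 \<le> t \<Longrightarrow> sqrt (disagreement I E (\<Lambda> t)) \<le> Q"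
    using disagreement_trajectory_bounded by metis
  have energy_bdd: "B - A * Q \<le> energy (\<Lambda> t)" if "1 \<le> t" for t
  proof -
    have "A * sqrt (disagreement I E (\<Lambda> t)) \<le> A * Q" using Q[OF that] A by (rule mult_left_mono)
    moreover have "0 \<le> k / 4 * disagreement I E (\<Lambda> t)"
      using k_pos disagreement_nonneg[of I E "\<Lambda> t"] by simp
    ultimately show ?thesis using AB[of "\<Lambda> t"] by linarith
  qed
  have "\<exists>t\<ge>1. D t < inverse (real (Suc n))" for n
    by (rule bounded_below_descent_imp_small_rate[OF _ energy_bdd])
      (auto simp: D_def intro: energy_trajectory_has_real_derivative)
  then obtain \<tau> where \<tau>: "\<And>n. 1 \<le> \<tau> n" "\<And>n. D (\<tau> n) < inverse (real (Suc n))" by metis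
  have D_nonneg: "0 \<le> D t" for t unfolding D_def by (intro sum_nonneg) auto
  have "(\<lambda>n. D (\<tau> n)) \<longlonglongrightarrow> 0"
    by (rule Lim_null_comparison[OF _ LIMSEQ_inverse_real_of_nat])
      (use \<tau>(2) D_nonneg in \<open>auto intro: always_eventually less_imp_le\<close>)
  then have sqrt_D: "(\<lambda>n. sqrt (D (\<tau> n))) \<longlonglongrightarrow> 0" using tendsto_real_sqrt by fastforce
  show thesis
  proof (rule that[OF \<tau>(1)])
    fix i assume i: "i \<in> I"
    have "\<bar>velocity (\<Lambda> t) i\<bar> \<le> sqrt (D t)" for t
      unfolding D_def by (rule real_le_rsqrt) (use i finite in \<open>auto intro: member_le_sum\<close>)
    then show "(\<lambda>n. velocity (\<Lambda> (\<tau> n)) i) \<longlonglongrightarrow> 0"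
      by (intro Lim_null_comparison[OF _ sqrt_D] always_eventually) auto
  qed
qed

lemma equilibrium_limit_point:
  obtains p \<tau> where "\<And>n. 1 \<le> \<tau> n" "\<And>i. i \<in> I \<Longrightarrow> (\<lambda>n. \<Lambda> (\<tau> n) i) \<longlonglongrightarrow> p i"
    "\<And>i. i \<in> I \<Longrightarrow> velocity p i = 0"
proof -
  obtain \<tau> where \<tau>: "\<And>n. 1 \<le> \<tau> n"
    and small: "\<And>i. i \<in> I \<Longrightarrow> (\<lambda>n. velocity (\<Lambda> (\<tau> n)) i) \<longlonglongrightarrow> 0"
    using velocity_vanishes_along_sequence by metis
  obtain B where B: "\<And>t i. 1 \<le> t \<Longrightarrow> i \<in> I \<Longrightarrow> \<bar>\<Lambda> t i\<bar> \<le> B"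
    using trajectory_bounded by metis
  define y where "y n = \<Lambda> (\<tau> n)" for n
  have "\<bar>y n i\<bar> \<le> B" if "i \<in> I" for n i unfolding y_def using B[OF \<tau> that] .
  then obtain r p where r: "strict_mono r" and p_all: "\<forall>i\<in>I. (\<lambda>n. y (r n) i) \<longlonglongrightarrow> p i"
    using finite_bounded_imp_convergent_subsequence[OF finite, of y B] by blast
  have p: "(\<lambda>n. \<Lambda> (\<tau> (r n)) i) \<longlonglongrightarrow> p i" if "i \<in> I" for i
    using p_all that by (simp add: y_def)
  have "velocity p i = 0" if i: "i \<in> I" for i
  proof (rule LIMSEQ_unique)
    have nb: "j \<in> I" if "(j, i) \<in> E" for j using that edges by auto
    have g: "(\<lambda>n. g i (\<Lambda> (\<tau> (r n)) i)) \<longlonglongrightarrow> g i (p i)"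
      by (rule isCont_tendsto_compose[OF _ p[OF i]])
        (use g_continuous[OF i] in \<open>simp add: continuous_on_eq_continuous_at\<close>)
    show "(\<lambda>n. velocity (\<Lambda> (\<tau> (r n))) i) \<longlonglongrightarrow> velocity p i"
      unfolding velocity_def diffusion_def by (intro tendsto_intros g p i nb) auto
    show "(\<lambda>n. velocity (\<Lambda> (\<tau> (r n))) i) \<longlonglongrightarrow> 0"
      using LIMSEQ_subseq_LIMSEQ[OF small[OF i] r] by (simp add: o_def)
  qed
  then show thesis using that[of "\<tau> \<circ> r" p] \<tau> p by simp
qed

lemma distance_to_equilibrium_antimono:
  assumes eq: "\<And>i. i \<in> I \<Longrightarrow> velocity p i = 0" and "0 < u" "u \<le> t"
  shows "(\<Sum>i\<in>I. (\<Lambda> t i - p i)\<^sup>2) \<le> (\<Sum>i\<in>I. (\<Lambda> u i - p i)\<^sup>2)"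
proof (rule DERIV_nonpos_imp_nonincreasing[OF assms(3)])
  fix s assume "u \<le> s" "s \<le> t"
  then have s: "0 < s" using assms(2) by simp
  let ?D = "2 * (\<Sum>i\<in>I. (\<Lambda> s i - p i) * (velocity (\<Lambda> s) i - velocity p i))"
  have "((\<lambda>s. (\<Lambda> s i - p i)\<^sup>2) has_real_derivative
      2 * ((\<Lambda> s i - p i) * (velocity (\<Lambda> s) i - velocity p i))) (at s)" if i: "i \<in> I" for i
    using DERIV_power[OF DERIV_diff[OF trajectory[OF i s] DERIV_const], of "p i" 2] eq[OF i]
    by (simp add: algebra_simps)
  then have "((\<lambda>s. \<Sum>i\<in>I. (\<Lambda> s i - p i)\<^sup>2) has_real_derivative ?D) (at s)"
    unfolding sum_distrib_left by (rule DERIV_sum)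
  moreover have "?D \<le> 0" using velocity_dissipative by simp
  ultimately show "\<exists>D. ((\<lambda>s. \<Sum>i\<in>I. (\<Lambda> s i - p i)\<^sup>2) has_real_derivative D) (at s) \<and> D \<le> 0"
    by blast
qed

lemma trajectory_converges_to_equilibrium:
  obtains p where "\<And>i. i \<in> I \<Longrightarrow> ((\<lambda>t. \<Lambda> t i) \<longlongrightarrow> p i) at_top"
    "\<And>i. i \<in> I \<Longrightarrow> velocity p i = 0"
proof -
  obtain p \<tau> where \<tau>: "\<And>n. 1 \<le> \<tau> n" and p: "\<And>i. i \<in> I \<Longrightarrow> (\<lambda>n. \<Lambda> (\<tau> n) i) \<longlonglongrightarrow> p i"
    and eq: "\<And>i. i \<in> I \<Longrightarrow> velocity p i = 0"
    using equilibrium_limit_point by metis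
  define W where "W t = (\<Sum>i\<in>I. (\<Lambda> t i - p i)\<^sup>2)" for t
  have "(\<lambda>n. W (\<tau> n)) \<longlonglongrightarrow> (\<Sum>i\<in>I. (p i - p i)\<^sup>2)"
    unfolding W_def by (intro tendsto_sum tendsto_power tendsto_diff tendsto_const p)
  then have W_\<tau>: "(\<lambda>n. W (\<tau> n)) \<longlonglongrightarrow> 0" by simp
  have W: "(W \<longlongrightarrow> 0) at_top"
  proof (rule tendstoI)
    fix \<epsilon> :: real assume "0 < \<epsilon>"
    then obtain n0 where "\<forall>n\<ge>n0. norm (W (\<tau> n) - 0) < \<epsilon>" using LIMSEQ_D[OF W_\<tau>] by blast
    then have n: "W (\<tau> n0) < \<epsilon>" by auto
    have "dist (W t) 0 < \<epsilon>" if "\<tau> n0 \<le> t" for t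
    proof -
      have "W t \<le> W (\<tau> n0)"
        unfolding W_def by (rule distance_to_equilibrium_antimono[OF eq]) (use \<tau>[of n0] that in auto)
      moreover have "0 \<le> W t" unfolding W_def by (intro sum_nonneg) auto
      ultimately show ?thesis using n by simp
    qed
    then show "\<forall>\<^sub>F t in at_top. dist (W t) 0 < \<epsilon>"
      unfolding eventually_at_top_linorder by blast
  qed
  show thesis
  proof (rule that[OF _ eq])
    fix i assume i: "i \<in> I"
    have "\<forall>t. norm (\<Lambda> t i - p i) \<le> sqrt (W t)"
      unfolding W_def real_norm_def
      by (intro allI real_le_rsqrt) (use i finite in \<open>auto intro: member_le_sum\<close>)
    moreover have "((\<lambda>t. sqrt (W t)) \<longlongrightarrow> 0) at_top" using tendsto_real_sqrt[OF W] by simp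
    ultimately have "((\<lambda>t. \<Lambda> t i - p i) \<longlongrightarrow> 0) at_top"
      by (rule Lim_null_comparison[OF always_eventually])
    then show "((\<lambda>t. \<Lambda> t i) \<longlongrightarrow> p i) at_top" by (rule LIM_zero_cancel)
  qed
qed

theorem trajectory_convergence:
  "(\<forall>i\<in>I. \<exists>L. ((\<lambda>t. \<Lambda> t i) \<longlongrightarrow> L) at_top)
     \<and> ((\<lambda>t. \<Sum>i\<in>I. g i (\<Lambda> t i)) \<longlongrightarrow> (\<Sum>i\<in>I. d i)) at_top"
proof -
  obtain p where conv: "\<And>i. i \<in> I \<Longrightarrow> ((\<lambda>t. \<Lambda> t i) \<longlongrightarrow> p i) at_top"
    and eq: "\<And>i. i \<in> I \<Longrightarrow> velocity p i = 0"
    using trajectory_converges_to_equilibrium by metis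
  have "((\<lambda>t. \<Sum>i\<in>I. g i (\<Lambda> t i)) \<longlongrightarrow> (\<Sum>i\<in>I. g i (p i))) at_top"
    using g_continuous
    by (intro tendsto_sum isCont_tendsto_compose[OF _ conv]) (simp_all add: continuous_on_eq_continuous_at)
  moreover have "(\<Sum>i\<in>I. g i (p i)) = (\<Sum>i\<in>I. d i)"
    using sum_velocity[of p] eq by simp
  ultimately show ?thesis using conv by auto
qed

end

lemma consensus_field_net_supply:
  fixes f \<phi> :: "'a \<Rightarrow> real \<Rightarrow> real" and lo hi :: "'a \<Rightarrow> real"
  assumes "finite I" "I \<noteq> {}" "E \<subseteq> I \<times> I" "sym E"
    and "\<And>i j. i \<in> I \<Longrightarrow> j \<in> I \<Longrightarrow> (i, j) \<in> E\<^sup>*"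
    and agent: "\<And>i. i \<in> I \<Longrightarrow> agent (f i) (\<phi> i) (lo i) (hi i)"
    and feasible_lo: "(\<Sum>i\<in>I. lo i - \<phi> i (lo i)) \<le> (\<Sum>i\<in>I. d i)"
    and feasible_hi: "(\<Sum>i\<in>I. d i) \<le> (\<Sum>i\<in>I. hi i - \<phi> i (hi i))"
    and "0 < k"
  defines "R \<equiv> \<Sum>i\<in>I. \<bar>vfun (f i) (\<phi> i) (lo i)\<bar> + \<bar>vfun (f i) (\<phi> i) (hi i)\<bar>"
  shows "consensus_field I E d (\<lambda>i. net_supply (f i) (\<phi> i) (lo i) (hi i)) k R"
proof -
  let ?g = "\<lambda>i. net_supply (f i) (\<phi> i) (lo i) (hi i)"
  have R: "\<bar>vfun (f i) (\<phi> i) (lo i)\<bar> + \<bar>vfun (f i) (\<phi> i) (hi i)\<bar> \<le> R" if "i \<in> I" for i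
    unfolding R_def by (rule member_le_sum[OF that]) (auto simp: assms(1))
  have below: "?g i l = lo i - \<phi> i (lo i)" if "i \<in> I" "l \<le> -R" for i l
    using agent.net_supply_below[OF agent[OF that(1)]] R[OF that(1)] that(2) by simp
  have above: "?g i l = hi i - \<phi> i (hi i)" if "i \<in> I" "R \<le> l" for i l
    using agent.net_supply_above[OF agent[OF that(1)]] R[OF that(1)] that(2) by simp
  show ?thesis
  proof unfold_locales
    show "0 \<le> R" unfolding R_def by (intro sum_nonneg) auto
    show "(\<Sum>i\<in>I. ?g i (-R)) \<le> (\<Sum>i\<in>I. d i)" using feasible_lo by (simp add: below)
    show "(\<Sum>i\<in>I. d i) \<le> (\<Sum>i\<in>I. ?g i R)" using feasible_hi by (simp add: above)
    fix i assume i: "i \<in> I"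
    show "continuous_on UNIV (?g i)" by (rule agent.net_supply_continuous[OF agent[OF i]])
    show "mono (?g i)" by (rule agent.net_supply_mono[OF agent[OF i]])
    show "?g i l = ?g i (-R)" if "l \<le> -R" for l using below[OF i that] below[OF i] by simp
    show "?g i l = ?g i R" if "R \<le> l" for l using above[OF i that] above[OF i] by simp
  qed (use assms in auto)
qed

theorem theorem2:
  fixes N :: nat
    and d lo hi :: "nat \<Rightarrow> real"
    and f \<phi> :: "nat \<Rightarrow> real \<Rightarrow> real"
    and E :: "(nat \<times> nat) set"
    and k :: real
    and \<Lambda> :: "real \<Rightarrow> nat \<Rightarrow> real"
  assumes interval: "\<And>i. i \<in> {1..N} \<Longrightarrow> lo i \<le> hi i"
    and A1_f_C1: "\<And>i. i \<in> {1..N} \<Longrightarrow> f i C1_differentiable_on UNIV"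
    and A1_phi_C1: "\<And>i. i \<in> {1..N} \<Longrightarrow> \<phi> i C1_differentiable_on UNIV"
    and A1_f_strict_convex: "\<And>i. i \<in> {1..N} \<Longrightarrow> strictly_convex_on {lo i..hi i} (f i)"
    and A1_phi_convex: "\<And>i. i \<in> {1..N} \<Longrightarrow> convex_on {lo i..hi i} (\<phi> i)"
    and A1_phi_deriv: "\<And>i x. i \<in> {1..N} \<Longrightarrow> x \<in> {lo i..hi i} \<Longrightarrow> deriv (\<phi> i) x < 1"
    and A2: "\<And>i x. i \<in> {1..N} \<Longrightarrow> x \<in> {lo i..hi i} \<Longrightarrow> deriv (f i) x > 0"
    and A3_edges: "E \<subseteq> {1..N} \<times> {1..N}"
    and A3_undirected: "\<And>i j. (i, j) \<in> E \<Longrightarrow> (j, i) \<in> E"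
    and A3_connected: "\<And>i j. i \<in> {1..N} \<Longrightarrow> j \<in> {1..N} \<Longrightarrow> (i, j) \<in> E\<^sup>*"
    and feasible_lo: "(\<Sum>i\<in>{1..N}. lo i - \<phi> i (lo i)) \<le> (\<Sum>i\<in>{1..N}. d i)"
    and feasible_hi: "(\<Sum>i\<in>{1..N}. d i) \<le> (\<Sum>i\<in>{1..N}. hi i - \<phi> i (hi i))"
    and k_pos: "k > 0"
    and dynamics: "\<And>i t. i \<in> {1..N} \<Longrightarrow> t \<ge> 0 \<Longrightarrow>
        ((\<lambda>s. \<Lambda> s i) has_real_derivative
            (d i - xhat (f i) (\<phi> i) (lo i) (hi i) (\<Lambda> t i)
                 + \<phi> i (xhat (f i) (\<phi> i) (lo i) (hi i) (\<Lambda> t i))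
                 + k * (\<Sum>j\<in>{j. (j, i) \<in> E}. \<Lambda> t j - \<Lambda> t i)))
          (at t within {0..})"
  shows "(\<forall>i\<in>{1..N}. \<exists>L. ((\<lambda>t. \<Lambda> t i) \<longlongrightarrow> L) at_top)
       \<and> ((\<lambda>t. \<Sum>i\<in>{1..N}. xhat (f i) (\<phi> i) (lo i) (hi i) (\<Lambda> t i)
                        - \<phi> i (xhat (f i) (\<phi> i) (lo i) (hi i) (\<Lambda> t i)))
            \<longlongrightarrow> (\<Sum>i\<in>{1..N}. d i)) at_top"
proof (cases "N = 0")
  case False
  let ?g = "\<lambda>i. net_supply (f i) (\<phi> i) (lo i) (hi i)"
  have "agent (f i) (\<phi> i) (lo i) (hi i)" if "i \<in> {1..N}" for i
    by unfold_locales (use that assms in auto)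
  then have field: "consensus_field {1..N} E d ?g k
      (\<Sum>i\<in>{1..N}. \<bar>vfun (f i) (\<phi> i) (lo i)\<bar> + \<bar>vfun (f i) (\<phi> i) (hi i)\<bar>)"
    using False assms by (intro consensus_field_net_supply) (auto intro: symI)
  then have "consensus_trajectory {1..N} E d ?g k
      (\<Sum>i\<in>{1..N}. \<bar>vfun (f i) (\<phi> i) (lo i)\<bar> + \<bar>vfun (f i) (\<phi> i) (hi i)\<bar>) \<Lambda>"
  proof (intro consensus_trajectory.intro consensus_trajectory_axioms.intro)
    fix i and t :: real assume i: "i \<in> {1..N}" and t: "0 < t"
    then have "at t within {0..} = at t" by (intro at_within_interior) auto
    then show "((\<lambda>s. \<Lambda> s i) has_real_derivative consensus_field.velocity E d ?g k (\<Lambda> t) i) (at t)"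
      using dynamics[OF i, of t] t
      by (simp add: consensus_field.velocity_def[OF field] diffusion_def net_supply_def algebra_simps)
  qed
  then show ?thesis
    using consensus_trajectory.trajectory_convergence by (fastforce simp: net_supply_def)
qed simp

end
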